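(* Let $X$ be a metrizable space and $\mathcal{U}$ an open cover of $X$. Then there is an l-complete continuous dissection $\mathcal{F}$ over $X$ such that every minimal $\mathcal{F}$-wedge is contained in $U\times I$ for some $U\in\mathcal{U}$.
   Context: Let $I=(0,1]$. For a metrizable space $X$, a continuous dissection over $X$ is a family $\mathcal{F}$ of continuous functions $X\to[0,1]$ containing the constant functions $0$ and $1$ that is locally finite: every $x\in X$ has a neighbourhood $U$ such that $\{\xi|_U:\xi\in\mathcal{F}\}$ is finite. It is l-complete if it is closed under pointwise maximum, pointwise minimum and pointwise limits of convergent directed families. An $\mathcal{F}$-wedge is a subset of $X\times I$ of the form $\{(x,t):\xi_1(x)<t\le\xi_2(x)\}$ with $\xi_1,\xi_2\in\mathcal{F}$; a minimal $\mathcal{F}$-wedge is a nonempty $\mathcal{F}$-wedge minimal under inclusion. *)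

theory Defs
  imports "HOL-Analysis.Analysis"
begin

text \<open>All functions are considered only on the carrier (topspace X); values
outside the carrier are irrelevant.\<close>

definition le_on :: "'a topology \<Rightarrow> ('a \<Rightarrow> real) \<Rightarrow> ('a \<Rightarrow> real) \<Rightarrow> bool" where
  "le_on X f g \<longleftrightarrow> (\<forall>x\<in>topspace X. f x \<le> g x)"

definition eq_on :: "'a topology \<Rightarrow> ('a \<Rightarrow> real) \<Rightarrow> ('a \<Rightarrow> real) \<Rightarrow> bool" where
  "eq_on X f g \<longleftrightarrow> (\<forall>x\<in>topspace X. f x = g x)"

definition net_filter :: "('b \<Rightarrow> 'b \<Rightarrow> bool) \<Rightarrow> 'b set \<Rightarrow> 'b filter" where
  "net_filter R D = (INF d\<in>D. principal {e\<in>D. R d e})"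

definition directed_by :: "('b \<Rightarrow> 'b \<Rightarrow> bool) \<Rightarrow> 'b set \<Rightarrow> bool" where
  "directed_by R D \<longleftrightarrow> D \<noteq> {} \<and> (\<forall>a\<in>D. \<forall>b\<in>D. \<exists>c\<in>D. R a c \<and> R b c)"

definition continuous_dissection :: "'a topology \<Rightarrow> ('a \<Rightarrow> real) set \<Rightarrow> bool" where
  "continuous_dissection X F \<longleftrightarrow>
     (\<forall>\<xi>\<in>F. continuous_map X euclideanreal \<xi> \<and> (\<forall>x\<in>topspace X. 0 \<le> \<xi> x \<and> \<xi> x \<le> 1))
   \<and> (\<lambda>x. 0) \<in> F \<and> (\<lambda>x. 1) \<in> F
   \<and> (\<forall>x\<in>topspace X. \<exists>U. openin X U \<and> x \<in> U \<and>
          finite ((\<lambda>\<xi>. restrict \<xi> U) ` F))"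

definition l_complete :: "'a topology \<Rightarrow> ('a \<Rightarrow> real) set \<Rightarrow> bool" where
  "l_complete X F \<longleftrightarrow>
     (\<forall>\<xi>1\<in>F. \<forall>\<xi>2\<in>F. (\<exists>\<eta>\<in>F. eq_on X \<eta> (\<lambda>x. max (\<xi>1 x) (\<xi>2 x)))
                     \<and> (\<exists>\<eta>\<in>F. eq_on X \<eta> (\<lambda>x. min (\<xi>1 x) (\<xi>2 x))))
   \<and> (\<forall>D g. D \<subseteq> F \<longrightarrow>
        (directed_by (le_on X) D \<and>
           (\<forall>x\<in>topspace X. ((\<lambda>\<xi>. \<xi> x) \<longlongrightarrow> g x) (net_filter (le_on X) D))
         \<or> directed_by (\<lambda>f g. le_on X g f) D \<and>
           (\<forall>x\<in>topspace X. ((\<lambda>\<xi>. \<xi> x) \<longlongrightarrow> g x) (net_filter (\<lambda>f g. le_on X g f) D)))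
        \<longrightarrow> (\<exists>\<eta>\<in>F. eq_on X \<eta> g))"

definition wedge :: "'a topology \<Rightarrow> ('a \<Rightarrow> real) \<Rightarrow> ('a \<Rightarrow> real) \<Rightarrow> ('a \<times> real) set" where
  "wedge X \<xi>1 \<xi>2 = {(x, t). x \<in> topspace X \<and> t \<in> {0<..1} \<and> \<xi>1 x < t \<and> t \<le> \<xi>2 x}"

definition is_wedge :: "'a topology \<Rightarrow> ('a \<Rightarrow> real) set \<Rightarrow> ('a \<times> real) set \<Rightarrow> bool" where
  "is_wedge X F W \<longleftrightarrow> (\<exists>\<xi>1\<in>F. \<exists>\<xi>2\<in>F. W = wedge X \<xi>1 \<xi>2)"

definition minimal_wedge :: "'a topology \<Rightarrow> ('a \<Rightarrow> real) set \<Rightarrow> ('a \<times> real) set \<Rightarrow> bool" where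
  "minimal_wedge X F W \<longleftrightarrow> is_wedge X F W \<and> W \<noteq> {} \<and>
     (\<forall>W'. is_wedge X F W' \<and> W' \<noteq> {} \<and> W' \<subseteq> W \<longrightarrow> W' = W)"

end

theory Submission
  imports Defs
begin

text \<open>
  Let \<open>\<phi>\<^sub>i\<close> (\<open>i \<in> I\<close>) be a locally finite partition of unity subordinate
  to \<open>\<U>\<close> and fix a strict linear order on the index set \<open>I\<close>.  For every lower set
  \<open>S \<subseteq> I\<close> (closed downwards) put \<open>\<xi>\<^sub>S = \<Sum>i\<in>S. \<phi>\<^sub>i\<close>.  The family of all \<open>\<xi>\<^sub>S\<close> is the
  required dissection:
  \<^item> it is locally finite because near each point only finitely many \<open>\<phi>\<^sub>i\<close> are nonzero;
  \<^item> lower sets form a chain, so the \<open>\<xi>\<^sub>S\<close> are totally ordered (closure under max and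
    min), and the trace of any family of lower sets on the finite support at a point is
    attained by a member, so directed limits are again lower sums (unions resp.
    intersections of lower sets);
  \<^item> a nonempty wedge between \<open>\<xi>\<^sub>A\<close> and \<open>\<xi>\<^sub>B\<close> contains a wedge between \<open>\<xi>\<^sub>L\<close> and
    \<open>\<xi>\<^bsub>L \<union> {m}\<^esub>\<close> for a single index \<open>m\<close>; the latter lies over the support of \<open>\<phi>\<^sub>m\<close>, which
    is inside some member of \<open>\<U>\<close>.  So minimal wedges are small.
\<close>

lemma continuous_map_locally_finite_sum:
  fixes f :: "'i \<Rightarrow> 'a \<Rightarrow> real"
  assumes cont: "\<And>i. i \<in> I \<Longrightarrow> continuous_map X euclideanreal (f i)"
    and lf: "\<And>x. x \<in> topspace X \<Longrightarrow>
               \<exists>N. openin X N \<and> x \<in> N \<and> finite {i\<in>I. \<exists>y\<in>N. f i y \<noteq> 0}"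
  shows "continuous_map X euclideanreal (\<lambda>x. \<Sum>i | i \<in> I \<and> f i x \<noteq> 0. f i x)"
proof -
  define N where "N x = (SOME N. openin X N \<and> x \<in> N \<and> finite {i\<in>I. \<exists>y\<in>N. f i y \<noteq> 0})" for x
  define J where "J x = {i\<in>I. \<exists>y\<in>N x. f i y \<noteq> 0}" for x
  have N: "openin X (N x)" "x \<in> N x" "finite (J x)" if "x \<in> topspace X" for x
    using someI_ex[OF lf[OF that]] by (simp_all add: N_def J_def)
  have local_sum: "(\<Sum>i | i \<in> I \<and> f i y \<noteq> 0. f i y) = (\<Sum>i\<in>J x. f i y)"
    if "x \<in> topspace X" "y \<in> N x" for x y
    by (rule sum.mono_neutral_left) (use N that in \<open>auto simp: J_def\<close>)
  show ?thesis
  proof (rule pasting_lemma[where T = N and f = "\<lambda>x y. \<Sum>i\<in>J x. f i y" and I = "topspace X"])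
    show "continuous_map (subtopology X (N x)) euclideanreal (\<lambda>y. \<Sum>i\<in>J x. f i y)"
      if "x \<in> topspace X" for x
      by (intro continuous_map_from_subtopology continuous_map_sum) (use N that cont in \<open>auto simp: J_def\<close>)
  next
    show "\<exists>j. j \<in> topspace X \<and> x \<in> N j \<and>
            (\<Sum>i | i \<in> I \<and> f i x \<noteq> 0. f i x) = (\<Sum>i\<in>J j. f i x)"
      if "x \<in> topspace X" for x
      using N(2) local_sum that by blast
  next
    show "(\<Sum>i\<in>J x. f i y) = (\<Sum>i\<in>J x'. f i y)"
      if "x \<in> topspace X" "x' \<in> topspace X" "y \<in> topspace X \<inter> N x \<inter> N x'" for x x' y
      using local_sum[of x y] local_sum[of x' y] that by simp
  qed (use N in simp)
qed

lemma net_filter_eventually: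
  "d \<in> D \<Longrightarrow> eventually (\<lambda>e. e \<in> D \<and> R d e) (net_filter R D)"
  unfolding net_filter_def
  by (rule eventually_INF1[where i=d]) (auto simp: eventually_principal)

lemma net_filter_nontrivial:
  assumes directed: "directed_by R D" and refl: "\<And>a. a \<in> D \<Longrightarrow> R a a"
    and trans: "\<And>a b c. a \<in> D \<Longrightarrow> b \<in> D \<Longrightarrow> c \<in> D \<Longrightarrow> R a b \<Longrightarrow> R b c \<Longrightarrow> R a c"
  shows "net_filter R D \<noteq> bot"
proof
  assume "net_filter R D = bot"
  then have "eventually (\<lambda>_. False) (net_filter R D)" by simp
  moreover have "D \<noteq> {}" using directed by (simp add: directed_by_def)
  moreover have "\<exists>c\<in>D. principal {e\<in>D. R c e} \<le>
                   inf (principal {e\<in>D. R a e}) (principal {e\<in>D. R b e})"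
    if "a \<in> D" "b \<in> D" for a b
  proof -
    from directed that obtain c where "c \<in> D" "R a c" "R b c"
      unfolding directed_by_def by blast
    then have "{e\<in>D. R c e} \<subseteq> {e\<in>D. R a e} \<inter> {e\<in>D. R b e}" using trans that by blast
    then show ?thesis using \<open>c \<in> D\<close> by (intro bexI[of _ c]) simp_all
  qed
  ultimately have "\<exists>d\<in>D. eventually (\<lambda>_. False) (principal {e\<in>D. R d e})"
    unfolding net_filter_def
    using eventually_INF_base[of D "\<lambda>d. principal {e\<in>D. R d e}" "\<lambda>_. False"] by blast
  then show False using refl unfolding eventually_principal by blast
qed

lemma limit_of_eventually_constant:
  assumes "F \<noteq> bot" "(f \<longlongrightarrow> g) F" "eventually (\<lambda>e. f e = c) F"
  shows "g = (c::real)"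
  using tendsto_unique[OF assms(1) assms(2) tendsto_eventually[OF assms(3)]] .

lemma finite_strict_linear_order_max:
  assumes order: "strict_linear_order_on I r"
    and P: "finite P" "P \<noteq> {}" "P \<subseteq> I"
  shows "\<exists>m\<in>P. \<forall>j\<in>P. j \<noteq> m \<longrightarrow> (j, m) \<in> r"
  using P
proof (induction P rule: finite_ne_induct)
  case (singleton x) then show ?case by simp
next
  case (insert a P)
  then obtain m where m: "m \<in> P" "\<forall>j\<in>P. j \<noteq> m \<longrightarrow> (j, m) \<in> r" by auto
  have "a \<noteq> m" using insert m by auto
  then consider "(m, a) \<in> r" | "(a, m) \<in> r"
    using order insert m unfolding strict_linear_order_on_def total_on_def by blast
  then show ?case
  proof cases
    case 1
    have "trans r" using order by (simp add: strict_linear_order_on_def)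
    have "(j, a) \<in> r" if "j \<in> P" for j
    proof (cases "j = m")
      case False
      then have "(j, m) \<in> r" using m that by blast
      then show ?thesis using transD[OF \<open>trans r\<close> _ 1] by blast
    qed (use 1 in simp)
    then show ?thesis by auto
  next
    case 2
    then show ?thesis using m by auto
  qed
qed

text \<open>Nonnegativity and the
  sum being \<open>1\<close> are required at all points of the type, not only on the carrier, so that
  the sums over the empty and the full index set are literally the constants \<open>0\<close> and
  \<open>1\<close> demanded of a continuous dissection.\<close>

locale partition_of_unity =
  fixes X :: "'a topology" and I :: "'i set" and \<phi> :: "'i \<Rightarrow> 'a \<Rightarrow> real"
    and \<U> :: "'a set set"
  assumes continuous: "\<And>i. i \<in> I \<Longrightarrow> continuous_map X euclideanreal (\<phi> i)"
    and nonneg: "\<And>i x. 0 \<le> \<phi> i x"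
    and locally_finite: "\<And>x. x \<in> topspace X \<Longrightarrow>
           \<exists>N. openin X N \<and> x \<in> N \<and> finite {i\<in>I. \<exists>y\<in>N. \<phi> i y \<noteq> 0}"
    and finite_support: "\<And>x. finite {i\<in>I. \<phi> i x \<noteq> 0}"
    and sum_one: "\<And>x. (\<Sum>i | i \<in> I \<and> \<phi> i x \<noteq> 0. \<phi> i x) = 1"
    and subordinate: "\<And>i. i \<in> I \<Longrightarrow> \<exists>U\<in>\<U>. {x\<in>topspace X. \<phi> i x \<noteq> 0} \<subseteq> U"
begin

definition supp :: "'a \<Rightarrow> 'i set" where
  "supp x = {i\<in>I. \<phi> i x \<noteq> 0}"

definition psum :: "'i set \<Rightarrow> 'a \<Rightarrow> real" where
  "psum S x = (\<Sum>i\<in>S \<inter> supp x. \<phi> i x)"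

lemma finite_supp: "finite (supp x)"
  using finite_support by (simp add: supp_def)

lemma psum_cong: "S \<inter> supp x = T \<inter> supp x \<Longrightarrow> psum S x = psum T x"
  by (simp add: psum_def)

lemma psum_mono: "S \<subseteq> T \<Longrightarrow> psum S x \<le> psum T x"
  unfolding psum_def by (rule sum_mono2) (use finite_supp nonneg in auto)

lemma psum_nonneg: "0 \<le> psum S x"
  unfolding psum_def by (rule sum_nonneg) (use nonneg in auto)

lemma psum_empty: "psum {} = (\<lambda>x. 0)"
  by (auto simp: psum_def)

lemma psum_all: "psum I = (\<lambda>x. 1)"
proof
  fix x
  have "I \<inter> supp x = {i\<in>I. \<phi> i x \<noteq> 0}" by (auto simp: supp_def)
  then show "psum I x = 1" using sum_one by (simp add: psum_def)
qed

lemma psum_le_one: "S \<subseteq> I \<Longrightarrow> psum S x \<le> 1"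
  using psum_mono[of S I x] by (simp add: psum_all)

lemma continuous_psum: "S \<subseteq> I \<Longrightarrow> continuous_map X euclideanreal (psum S)"
proof -
  assume S: "S \<subseteq> I"
  have "continuous_map X euclideanreal (\<lambda>x. \<Sum>i | i \<in> S \<and> \<phi> i x \<noteq> 0. \<phi> i x)"
  proof (rule continuous_map_locally_finite_sum)
    fix x assume "x \<in> topspace X"
    then obtain N where "openin X N" "x \<in> N" "finite {i\<in>I. \<exists>y\<in>N. \<phi> i y \<noteq> 0}"
      using locally_finite by blast
    moreover have "{i\<in>S. \<exists>y\<in>N. \<phi> i y \<noteq> 0} \<subseteq> {i\<in>I. \<exists>y\<in>N. \<phi> i y \<noteq> 0}" using S by blast
    ultimately show "\<exists>N. openin X N \<and> x \<in> N \<and> finite {i\<in>S. \<exists>y\<in>N. \<phi> i y \<noteq> 0}"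
      using finite_subset by blast
  qed (use S continuous in blast)
  moreover have "{i. i \<in> S \<and> \<phi> i x \<noteq> 0} = S \<inter> supp x" for x
    using S by (auto simp: supp_def)
  then have "(\<lambda>x. \<Sum>i | i \<in> S \<and> \<phi> i x \<noteq> 0. \<phi> i x) = psum S"
    by (simp add: psum_def fun_eq_iff)
  ultimately show ?thesis by simp
qed

end

locale ordered_partition_of_unity =
  partition_of_unity X I \<phi> \<U> for X :: "'a topology" and I :: "'i set" and \<phi> \<U> +
  fixes r :: "'i rel"
  assumes order: "strict_linear_order_on I r"
begin

definition lower :: "'i set \<Rightarrow> bool" where
  "lower S \<longleftrightarrow> S \<subseteq> I \<and> (\<forall>i\<in>S. \<forall>j\<in>I. (j, i) \<in> r \<longrightarrow> j \<in> S)"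

definition lower_sums :: "('a \<Rightarrow> real) set" where
  "lower_sums = psum ` Collect lower"

lemma lower_subset: "lower S \<Longrightarrow> S \<subseteq> I"
  by (simp add: lower_def)

lemma lower_empty: "lower {}" and lower_all: "lower I"
  by (simp_all add: lower_def)

lemma lower_chain: "lower S \<Longrightarrow> lower T \<Longrightarrow> S \<subseteq> T \<or> T \<subseteq> S"
proof (rule ccontr)
  assume S: "lower S" and T: "lower T" and "\<not> (S \<subseteq> T \<or> T \<subseteq> S)"
  then obtain i j where ij: "i \<in> S" "i \<notin> T" "j \<in> T" "j \<notin> S" by blast
  then have "i \<in> I" "j \<in> I" "i \<noteq> j" using S T lower_subset by blast+
  then have "(i, j) \<in> r \<or> (j, i) \<in> r"
    using order by (simp add: strict_linear_order_on_def total_on_def)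
  then show False using S T ij \<open>i \<in> I\<close> \<open>j \<in> I\<close> unfolding lower_def by blast
qed

lemma lower_below:
  assumes A: "lower A" and B: "lower B"
  shows "lower (A \<union> {j\<in>B. (j, m) \<in> r})"
  unfolding lower_def
proof (intro conjI ballI impI)
  show "A \<union> {j\<in>B. (j, m) \<in> r} \<subseteq> I" using A B lower_subset by blast
  fix i j assume i: "i \<in> A \<union> {j\<in>B. (j, m) \<in> r}" and j: "j \<in> I" "(j, i) \<in> r"
  have "trans r" using order by (simp add: strict_linear_order_on_def)
  then have "i \<in> B \<and> (i, m) \<in> r \<Longrightarrow> (j, m) \<in> r" using j(2) by (blast dest: transD)
  then show "j \<in> A \<union> {j\<in>B. (j, m) \<in> r}"
    using i j A B unfolding lower_def by blast
qed

lemma lower_upto: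
  assumes A: "lower A" and B: "lower B" and m: "m \<in> B"
  shows "lower (insert m (A \<union> {j\<in>B. (j, m) \<in> r}))"
proof -
  have "lower (A \<union> {j\<in>B. (j, m) \<in> r})" using A B by (rule lower_below)
  moreover have "m \<in> I" using B m lower_subset by blast
  moreover have "j \<in> B" if "j \<in> I" "(j, m) \<in> r" for j using B m that unfolding lower_def by blast
  ultimately show ?thesis unfolding lower_def by blast
qed

lemma lower_sums_iff: "\<xi> \<in> lower_sums \<longleftrightarrow> (\<exists>S. lower S \<and> \<xi> = psum S)"
  by (auto simp: lower_sums_def)

text \<open>Near a point only the finitely many indices in a fixed finite set \<open>J\<close> contribute,
  so every lower sum agrees there with the sum over a subset of \<open>J\<close>.\<close>

lemma lower_sums_locally_finite:
  assumes "x \<in> topspace X"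
  shows "\<exists>U. openin X U \<and> x \<in> U \<and> finite ((\<lambda>\<xi>. restrict \<xi> U) ` lower_sums)"
proof -
  obtain N where N: "openin X N" "x \<in> N" "finite {i\<in>I. \<exists>y\<in>N. \<phi> i y \<noteq> 0}"
    using locally_finite assms by blast
  define J where "J = {i\<in>I. \<exists>y\<in>N. \<phi> i y \<noteq> 0}"
  have "restrict (psum S) N = restrict (psum (S \<inter> J)) N" for S
  proof
    fix y show "restrict (psum S) N y = restrict (psum (S \<inter> J)) N y"
      by (cases "y \<in> N") (auto simp: J_def supp_def intro!: psum_cong)
  qed
  then have "(\<lambda>\<xi>. restrict \<xi> N) ` lower_sums \<subseteq> (\<lambda>T. restrict (psum T) N) ` Pow J"
    by (auto simp: lower_sums_def)
  moreover have "finite (Pow J)" using N(3) by (simp add: J_def)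
  ultimately have "finite ((\<lambda>\<xi>. restrict \<xi> N) ` lower_sums)"
    by (meson finite_imageI finite_subset)
  then show ?thesis using N by blast
qed

lemma continuous_dissection_lower_sums: "continuous_dissection X lower_sums"
  unfolding continuous_dissection_def
proof (intro conjI)
  show "\<forall>\<xi>\<in>lower_sums. continuous_map X euclideanreal \<xi> \<and> (\<forall>x\<in>topspace X. 0 \<le> \<xi> x \<and> \<xi> x \<le> 1)"
    using continuous_psum psum_nonneg psum_le_one lower_subset by (auto simp: lower_sums_iff)
  show "(\<lambda>x. 0) \<in> lower_sums" "(\<lambda>x. 1) \<in> lower_sums"
    using lower_empty lower_all by (auto simp: lower_sums_iff psum_empty psum_all)
  show "\<forall>x\<in>topspace X. \<exists>U. openin X U \<and> x \<in> U \<and> finite ((\<lambda>\<xi>. restrict \<xi> U) ` lower_sums)"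
    using lower_sums_locally_finite by blast
qed

lemma lower_sums_comparable:
  assumes "\<xi>1 \<in> lower_sums" "\<xi>2 \<in> lower_sums"
  shows "(\<forall>x. \<xi>1 x \<le> \<xi>2 x) \<or> (\<forall>x. \<xi>2 x \<le> \<xi>1 x)"
proof -
  obtain S1 S2 where S: "lower S1" "\<xi>1 = psum S1" "lower S2" "\<xi>2 = psum S2"
    using assms by (auto simp: lower_sums_iff)
  then have "S1 \<subseteq> S2 \<or> S2 \<subseteq> S1" using lower_chain by blast
  then show ?thesis using S(2,4) psum_mono by blast
qed

lemma max_min_lower_sums:
  assumes "\<xi>1 \<in> lower_sums" "\<xi>2 \<in> lower_sums"
  shows "\<exists>\<eta>\<in>lower_sums. eq_on X \<eta> (\<lambda>x. max (\<xi>1 x) (\<xi>2 x))"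
    and "\<exists>\<eta>\<in>lower_sums. eq_on X \<eta> (\<lambda>x. min (\<xi>1 x) (\<xi>2 x))"
proof -
  consider "\<forall>x. \<xi>1 x \<le> \<xi>2 x" | "\<forall>x. \<xi>2 x \<le> \<xi>1 x"
    using lower_sums_comparable[OF assms] by blast
  then have "eq_on X \<xi>2 (\<lambda>x. max (\<xi>1 x) (\<xi>2 x)) \<and> eq_on X \<xi>1 (\<lambda>x. min (\<xi>1 x) (\<xi>2 x))
           \<or> eq_on X \<xi>1 (\<lambda>x. max (\<xi>1 x) (\<xi>2 x)) \<and> eq_on X \<xi>2 (\<lambda>x. min (\<xi>1 x) (\<xi>2 x))"
    by cases (simp_all add: eq_on_def max.absorb1 max.absorb2 min.absorb1 min.absorb2)
  then show "\<exists>\<eta>\<in>lower_sums. eq_on X \<eta> (\<lambda>x. max (\<xi>1 x) (\<xi>2 x))"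
    and "\<exists>\<eta>\<in>lower_sums. eq_on X \<eta> (\<lambda>x. min (\<xi>1 x) (\<xi>2 x))"
    using assms by blast+
qed

text \<open>A nonempty family of lower sets is a chain, so its traces on the finite set
  \<open>supp x\<close> form a finite chain, which contains its union and its intersection.\<close>

lemma lower_family_trace:
  assumes \<S>: "\<S> \<noteq> {}" "\<And>S. S \<in> \<S> \<Longrightarrow> lower S"
  shows "\<exists>S\<in>\<S>. S \<inter> supp x = \<Union>\<S> \<inter> supp x"
    and "\<exists>S\<in>\<S>. S \<inter> supp x = \<Inter>\<S> \<inter> supp x"
proof -
  define \<T> where "\<T> = (\<lambda>S. S \<inter> supp x) ` \<S>"
  have traces: "\<T> \<subseteq> Pow (supp x)" by (auto simp: \<T>_def)
  then have fin: "finite \<T>" using finite_supp finite_subset by blast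
  have ne: "\<T> \<noteq> {}" using \<S> by (simp add: \<T>_def)
  have comparable: "A \<subseteq> B \<or> B \<subseteq> A" if AB: "A \<in> \<T>" "B \<in> \<T>" for A B
  proof -
    obtain S S' where "S \<in> \<S>" "S' \<in> \<S>" "A = S \<inter> supp x" "B = S' \<inter> supp x"
      using AB by (auto simp: \<T>_def)
    moreover have "S \<subseteq> S' \<or> S' \<subseteq> S" using lower_chain \<S>(2) calculation(1,2) by blast
    ultimately show ?thesis by blast
  qed
  have chain: "subset.chain (Pow (supp x)) \<T>"
    unfolding subset_chain_def by (intro conjI ballI traces comparable)
  have "\<Union>\<T> \<in> \<T>" by (rule Union_in_chain[OF fin ne chain])
  then obtain S where "\<Union>\<T> = S \<inter> supp x" "S \<in> \<S>" unfolding \<T>_def by (rule imageE)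
  moreover have "\<Union>\<T> = \<Union>\<S> \<inter> supp x" unfolding \<T>_def by blast
  ultimately show "\<exists>S\<in>\<S>. S \<inter> supp x = \<Union>\<S> \<inter> supp x" by metis
  have "\<Inter>\<T> \<in> \<T>" by (rule Inter_in_chain[OF fin ne chain])
  then obtain S' where "\<Inter>\<T> = S' \<inter> supp x" "S' \<in> \<S>" unfolding \<T>_def by (rule imageE)
  moreover have "\<Inter>\<T> = \<Inter>\<S> \<inter> supp x" unfolding \<T>_def using \<S>(1) by blast
  ultimately show "\<exists>S\<in>\<S>. S \<inter> supp x = \<Inter>\<S> \<inter> supp x" by metis
qed

lemma limit_in_lower_sums:
  assumes nontrivial: "net_filter R D \<noteq> bot"
    and lim: "\<forall>x\<in>topspace X. ((\<lambda>\<xi>. \<xi> x) \<longlongrightarrow> g x) (net_filter R D)"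
    and T: "lower T"
    and pinned: "\<And>x. x \<in> topspace X \<Longrightarrow> \<exists>\<xi>\<in>D. \<forall>e\<in>D. R \<xi> e \<longrightarrow> e x = psum T x"
  shows "\<exists>\<eta>\<in>lower_sums. eq_on X \<eta> g"
proof -
  have "psum T x = g x" if x: "x \<in> topspace X" for x
  proof -
    obtain \<xi> where \<xi>: "\<xi> \<in> D" "\<forall>e\<in>D. R \<xi> e \<longrightarrow> e x = psum T x"
      using pinned x by blast
    have "eventually (\<lambda>e. e x = psum T x) (net_filter R D)"
      by (rule eventually_mono[OF net_filter_eventually[OF \<xi>(1)]]) (use \<xi>(2) in blast)
    then have "g x = psum T x"
      by (rule limit_of_eventually_constant[OF nontrivial lim[rule_format, OF x]])
    then show ?thesis by simp
  qed
  moreover have "psum T \<in> lower_sums" using T by (auto simp: lower_sums_iff)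
  ultimately show ?thesis by (intro bexI[of _ "psum T"]) (auto simp: eq_on_def)
qed

text \<open>The limit of an increasing directed family of lower sums is the sum over the union
  of their lower sets; that of a decreasing one is the sum over their intersection.\<close>

lemma increasing_limit_in_lower_sums:
  assumes D: "D \<subseteq> lower_sums" "directed_by (le_on X) D"
    and lim: "\<forall>x\<in>topspace X. ((\<lambda>\<xi>. \<xi> x) \<longlongrightarrow> g x) (net_filter (le_on X) D)"
  shows "\<exists>\<eta>\<in>lower_sums. eq_on X \<eta> g"
proof -
  define \<S> where "\<S> = {S. lower S \<and> psum S \<in> D}"
  obtain \<xi> where "\<xi> \<in> D" using D(2) by (auto simp: directed_by_def)
  then have "\<xi> \<in> lower_sums" using D(1) by blast
  then obtain S where "lower S" "\<xi> = psum S" by (auto simp: lower_sums_iff)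
  then have \<S>: "\<S> \<noteq> {}" "\<And>S. S \<in> \<S> \<Longrightarrow> lower S"
    using \<open>\<xi> \<in> D\<close> by (auto simp: \<S>_def)
  show ?thesis
  proof (rule limit_in_lower_sums)
    show "net_filter (le_on X) D \<noteq> bot"
      by (rule net_filter_nontrivial[OF D(2)]) (auto simp: le_on_def intro: order_trans)
    show "lower (\<Union>\<S>)" using \<S>(2) unfolding lower_def by blast
    fix x assume x: "x \<in> topspace X"
    obtain S0 where S0: "S0 \<in> \<S>" "S0 \<inter> supp x = \<Union>\<S> \<inter> supp x"
      using lower_family_trace(1)[OF \<S>] by blast
    have "e x = psum (\<Union>\<S>) x" if e: "e \<in> D" "le_on X (psum S0) e" for e
    proof -
      have "e \<in> lower_sums" using e(1) D(1) by blast
      then obtain S where "lower S" "e = psum S" by (auto simp: lower_sums_iff)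
      then have "S \<in> \<S>" "e = psum S" using e(1) by (simp_all add: \<S>_def)
      then have "e x \<le> psum (\<Union>\<S>) x" by (simp add: Union_upper psum_mono)
      moreover have "psum S0 x \<le> e x" using e(2) x by (simp add: le_on_def)
      ultimately show ?thesis using psum_cong[OF S0(2)] by linarith
    qed
    then show "\<exists>\<xi>\<in>D. \<forall>e\<in>D. le_on X \<xi> e \<longrightarrow> e x = psum (\<Union>\<S>) x"
      using S0(1) by (auto simp: \<S>_def)
  qed (rule lim)
qed

lemma decreasing_limit_in_lower_sums:
  assumes D: "D \<subseteq> lower_sums" "directed_by (\<lambda>f g. le_on X g f) D"
    and lim: "\<forall>x\<in>topspace X. ((\<lambda>\<xi>. \<xi> x) \<longlongrightarrow> g x) (net_filter (\<lambda>f g. le_on X g f) D)"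
  shows "\<exists>\<eta>\<in>lower_sums. eq_on X \<eta> g"
proof -
  define \<S> where "\<S> = {S. lower S \<and> psum S \<in> D}"
  obtain \<xi> where "\<xi> \<in> D" using D(2) by (auto simp: directed_by_def)
  then have "\<xi> \<in> lower_sums" using D(1) by blast
  then obtain S where "lower S" "\<xi> = psum S" by (auto simp: lower_sums_iff)
  then have \<S>: "\<S> \<noteq> {}" "\<And>S. S \<in> \<S> \<Longrightarrow> lower S"
    using \<open>\<xi> \<in> D\<close> by (auto simp: \<S>_def)
  have \<S>_sub: "\<Inter>\<S> \<subseteq> I" using \<S> lower_subset by blast
  show ?thesis
  proof (rule limit_in_lower_sums)
    show "net_filter (\<lambda>f g. le_on X g f) D \<noteq> bot"
      by (rule net_filter_nontrivial[OF D(2)]) (auto simp: le_on_def intro: order_trans)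
    show "lower (\<Inter>\<S>)" using \<S> \<S>_sub unfolding lower_def by blast
    fix x assume x: "x \<in> topspace X"
    obtain S0 where S0: "S0 \<in> \<S>" "S0 \<inter> supp x = \<Inter>\<S> \<inter> supp x"
      using lower_family_trace(2)[OF \<S>] by blast
    have "e x = psum (\<Inter>\<S>) x" if e: "e \<in> D" "le_on X e (psum S0)" for e
    proof -
      have "e \<in> lower_sums" using e(1) D(1) by blast
      then obtain S where "lower S" "e = psum S" by (auto simp: lower_sums_iff)
      then have "S \<in> \<S>" "e = psum S" using e(1) by (simp_all add: \<S>_def)
      then have "psum (\<Inter>\<S>) x \<le> e x" by (simp add: Inter_lower psum_mono)
      moreover have "e x \<le> psum S0 x" using e(2) x by (simp add: le_on_def)
      ultimately show ?thesis using psum_cong[OF S0(2)] by linarith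
    qed
    then show "\<exists>\<xi>\<in>D. \<forall>e\<in>D. le_on X e \<xi> \<longrightarrow> e x = psum (\<Inter>\<S>) x"
      using S0(1) by (auto simp: \<S>_def)
  qed (rule lim)
qed

lemma l_complete_lower_sums: "l_complete X lower_sums"
  unfolding l_complete_def
proof (intro conjI ballI allI impI)
  fix \<xi>1 \<xi>2 assume "\<xi>1 \<in> lower_sums" "\<xi>2 \<in> lower_sums"
  then show "\<exists>\<eta>\<in>lower_sums. eq_on X \<eta> (\<lambda>x. max (\<xi>1 x) (\<xi>2 x))"
    and "\<exists>\<eta>\<in>lower_sums. eq_on X \<eta> (\<lambda>x. min (\<xi>1 x) (\<xi>2 x))"
    by (rule max_min_lower_sums)+
next
  fix D g assume "D \<subseteq> lower_sums"
    and "directed_by (le_on X) D \<and>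
           (\<forall>x\<in>topspace X. ((\<lambda>\<xi>. \<xi> x) \<longlongrightarrow> g x) (net_filter (le_on X) D))
         \<or> directed_by (\<lambda>f g. le_on X g f) D \<and>
           (\<forall>x\<in>topspace X. ((\<lambda>\<xi>. \<xi> x) \<longlongrightarrow> g x) (net_filter (\<lambda>f g. le_on X g f) D))"
  then show "\<exists>\<eta>\<in>lower_sums. eq_on X \<eta> g"
    using increasing_limit_in_lower_sums[of D g] decreasing_limit_in_lower_sums[of D g] by blast
qed

text \<open>Splitting off the \<open>r\<close>-largest index \<open>m\<close> of \<open>B - A\<close> that is active at \<open>x\<close>:
  the lower set \<open>B'\<close> of elements of \<open>B\<close> below \<open>m\<close> (together with \<open>A\<close>) and \<open>B' \<union> {m}\<close>
  are again lower, and at \<open>x\<close> the latter has the same trace as \<open>B\<close>.\<close>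

lemma top_index_split:
  assumes A: "lower A" and B: "lower B" and AB: "A \<subseteq> B" and ne: "(B - A) \<inter> supp x \<noteq> {}"
  obtains m where "m \<in> (B - A) \<inter> supp x"
    and "lower (A \<union> {j\<in>B. (j, m) \<in> r})" "lower (insert m (A \<union> {j\<in>B. (j, m) \<in> r}))"
    and "m \<notin> A \<union> {j\<in>B. (j, m) \<in> r}"
    and "insert m (A \<union> {j\<in>B. (j, m) \<in> r}) \<inter> supp x = B \<inter> supp x"
proof -
  have "finite ((B - A) \<inter> supp x)" using finite_supp[of x] by simp
  moreover have "(B - A) \<inter> supp x \<subseteq> I" by (auto simp: supp_def)
  ultimately obtain m where m: "m \<in> (B - A) \<inter> supp x"
    and top: "\<forall>j\<in>(B - A) \<inter> supp x. j \<noteq> m \<longrightarrow> (j, m) \<in> r"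
    using finite_strict_linear_order_max[OF order] ne by blast
  have "m \<notin> A \<union> {j\<in>B. (j, m) \<in> r}"
    using m order by (auto simp: strict_linear_order_on_def irrefl_def)
  moreover have "insert m (A \<union> {j\<in>B. (j, m) \<in> r}) \<inter> supp x = B \<inter> supp x"
  proof
    show "insert m (A \<union> {j\<in>B. (j, m) \<in> r}) \<inter> supp x \<subseteq> B \<inter> supp x" using AB m by auto
    show "B \<inter> supp x \<subseteq> insert m (A \<union> {j\<in>B. (j, m) \<in> r}) \<inter> supp x"
    proof
      fix j assume "j \<in> B \<inter> supp x"
      then show "j \<in> insert m (A \<union> {j\<in>B. (j, m) \<in> r}) \<inter> supp x"
        using top by (cases "j \<in> A") auto
    qed
  qed
  moreover have "m \<in> B" using m by blast
  ultimately show thesis using that m lower_below[OF A B] lower_upto[OF A B] by blast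
qed

text \<open>By induction on the number of active indices in \<open>B - A\<close>, splitting off the top one.\<close>

lemma crossing_index:
  assumes A: "lower A" and At: "psum A x < t"
  shows "lower B \<Longrightarrow> t \<le> psum B x \<Longrightarrow>
    \<exists>L m. lower L \<and> lower (insert m L) \<and> A \<subseteq> L \<and> insert m L \<subseteq> B \<and>
          psum L x < t \<and> t \<le> psum (insert m L) x"
proof (induction "card ((B - A) \<inter> supp x)" arbitrary: B rule: less_induct)
  case less
  note B = less.prems(1) and Bt = less.prems(2)
  have AB: "A \<subseteq> B"
  proof (rule ccontr)
    assume "\<not> A \<subseteq> B"
    then have "B \<subseteq> A" using lower_chain[OF A B] by blast
    then have "psum B x \<le> psum A x" by (rule psum_mono)
    then show False using At Bt by linarith
  qed
  have "(B - A) \<inter> supp x \<noteq> {}"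
  proof
    assume "(B - A) \<inter> supp x = {}"
    then have "B \<inter> supp x = A \<inter> supp x" using AB by auto
    then have "psum B x = psum A x" by (rule psum_cong)
    then show False using At Bt by linarith
  qed
  then obtain m where m: "m \<in> (B - A) \<inter> supp x"
    and B': "lower (A \<union> {j\<in>B. (j, m) \<in> r})" "lower (insert m (A \<union> {j\<in>B. (j, m) \<in> r}))"
    and m_new: "m \<notin> A \<union> {j\<in>B. (j, m) \<in> r}"
    and trace: "insert m (A \<union> {j\<in>B. (j, m) \<in> r}) \<inter> supp x = B \<inter> supp x"
    by (rule top_index_split[OF A B AB])
  define B' where "B' = A \<union> {j\<in>B. (j, m) \<in> r}"
  have AB': "A \<subseteq> B'" and B'B: "insert m B' \<subseteq> B" using AB m by (auto simp: B'_def)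
  show ?case
  proof (cases "t \<le> psum B' x")
    case True
    have "(B' - A) \<inter> supp x \<subset> (B - A) \<inter> supp x" using B'B m m_new by (auto simp: B'_def)
    then have "card ((B' - A) \<inter> supp x) < card ((B - A) \<inter> supp x)"
      by (rule psubset_card_mono[rotated]) (simp add: finite_supp)
    then obtain L m' where "lower L" "lower (insert m' L)" "A \<subseteq> L" "insert m' L \<subseteq> B'"
        "psum L x < t" "t \<le> psum (insert m' L) x"
      using less.hyps[OF _ B'(1)[folded B'_def] True] by blast
    then show ?thesis using B'B by (intro exI[of _ L] exI[of _ m']) auto
  next
    case False
    have "t \<le> psum (insert m B') x" using Bt psum_cong[OF trace[folded B'_def]] by simp
    then show ?thesis using False B'[folded B'_def] AB' B'B by (intro exI[of _ B'] exI[of _ m]) simp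
  qed
qed

lemma wedge_lower_sums_mono:
  assumes "A \<subseteq> L" "M \<subseteq> B"
  shows "wedge X (psum L) (psum M) \<subseteq> wedge X (psum A) (psum B)"
proof
  fix p assume "p \<in> wedge X (psum L) (psum M)"
  then obtain y u where p: "p = (y, u)" "y \<in> topspace X" "u \<in> {0<..1}"
      "psum L y < u" "u \<le> psum M y"
    by (auto simp: wedge_def)
  moreover have "psum A y \<le> psum L y" "psum M y \<le> psum B y"
    using psum_mono[OF assms(1)] psum_mono[OF assms(2)] by auto
  ultimately show "p \<in> wedge X (psum A) (psum B)" by (auto simp: wedge_def)
qed

text \<open>Adding a single index \<open>m\<close> to a lower sum only raises it where \<open>\<phi> m\<close> is nonzero.\<close>

lemma wedge_single_index:
  "wedge X (psum L) (psum (insert m L)) \<subseteq> {y\<in>topspace X. \<phi> m y \<noteq> 0} \<times> {0<..1}"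
proof
  fix p assume "p \<in> wedge X (psum L) (psum (insert m L))"
  then obtain y u where p: "p = (y, u)" "y \<in> topspace X" "u \<in> {0<..1}"
      "psum L y < u" "u \<le> psum (insert m L) y"
    by (auto simp: wedge_def)
  have "\<phi> m y \<noteq> 0"
  proof
    assume "\<phi> m y = 0"
    then have "insert m L \<inter> supp y = L \<inter> supp y" by (auto simp: supp_def)
    then have "psum (insert m L) y = psum L y" by (rule psum_cong)
    then show False using p by linarith
  qed
  then show "p \<in> {y\<in>topspace X. \<phi> m y \<noteq> 0} \<times> {0<..1}" using p by simp
qed

text \<open>A minimal wedge equals a wedge between \<open>\<xi>\<^sub>L\<close> and \<open>\<xi>\<^bsub>L \<union> {m}\<^esub>\<close>, so it lies over the
  support of \<open>\<phi>\<^sub>m\<close> and hence inside a member of the cover.\<close>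

lemma minimal_wedge_subordinate:
  assumes W: "minimal_wedge X lower_sums W"
  shows "\<exists>U\<in>\<U>. W \<subseteq> U \<times> {0<..1}"
proof -
  obtain \<xi>1 \<xi>2 where \<xi>: "\<xi>1 \<in> lower_sums" "\<xi>2 \<in> lower_sums" "W = wedge X \<xi>1 \<xi>2"
    using W unfolding minimal_wedge_def is_wedge_def by blast
  obtain A B where AB: "lower A" "lower B" and W_eq: "W = wedge X (psum A) (psum B)"
    using \<xi> unfolding lower_sums_iff by blast
  obtain x t where "(x, t) \<in> W" using W by (auto simp: minimal_wedge_def)
  then have x: "x \<in> topspace X" "t \<in> {0<..1}" "psum A x < t" "t \<le> psum B x"
    using W_eq by (auto simp: wedge_def)
  obtain L m where L: "lower L" "lower (insert m L)" "A \<subseteq> L" "insert m L \<subseteq> B"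
      "psum L x < t" "t \<le> psum (insert m L) x"
    using crossing_index[OF AB(1) x(3) AB(2) x(4)] by blast
  define W' where "W' = wedge X (psum L) (psum (insert m L))"
  have "psum L \<in> lower_sums" "psum (insert m L) \<in> lower_sums"
    using L(1,2) by (auto simp: lower_sums_iff)
  then have "is_wedge X lower_sums W'" unfolding is_wedge_def W'_def by blast
  moreover have "W' \<noteq> {}" using x L by (auto simp: W'_def wedge_def)
  moreover have "W' \<subseteq> W" unfolding W'_def W_eq by (rule wedge_lower_sums_mono) (use L in auto)
  ultimately have W': "W = W'" using W unfolding minimal_wedge_def by metis
  have "m \<in> I" using L(2) lower_subset by blast
  then obtain U where U: "U \<in> \<U>" "{y\<in>topspace X. \<phi> m y \<noteq> 0} \<subseteq> U" using subordinate by blast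
  have "W \<subseteq> {y\<in>topspace X. \<phi> m y \<noteq> 0} \<times> {0<..1}"
    unfolding W' W'_def by (rule wedge_single_index)
  also have "\<dots> \<subseteq> U \<times> {0<..1}" using U(2) by auto
  finally show ?thesis using U(1) by blast
qed

lemma dissection_for_cover:
  "\<exists>F. continuous_dissection X F \<and> l_complete X F \<and>
       (\<forall>W. minimal_wedge X F W \<longrightarrow> (\<exists>U\<in>\<U>. W \<subseteq> U \<times> {0<..1}))"
  using continuous_dissection_lower_sums l_complete_lower_sums minimal_wedge_subordinate
  by (intro exI[of _ lower_sums]) simp

end

context Metric_space
begin

lemma continuous_map_1_lipschitz:
  assumes "\<And>y z. y \<in> M \<Longrightarrow> z \<in> M \<Longrightarrow> \<bar>f y - f z\<bar> \<le> d y z"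
  shows "continuous_map mtopology euclideanreal f"
proof -
  have "continuous_map mtopology Met_TC.mtopology f"
    unfolding metric_continuous_map[OF Met_TC.Metric_space_axioms]
  proof (intro conjI ballI allI impI)
    show "f ` M \<subseteq> UNIV" by simp
    fix a and e :: real assume a: "a \<in> M" and e: "e > 0"
    show "\<exists>\<delta>>0. \<forall>x. x \<in> M \<and> d a x < \<delta> \<longrightarrow> dist (f a) (f x) < e"
    proof (intro exI conjI allI impI)
      show "e > 0" by fact
      fix x assume "x \<in> M \<and> d a x < e"
      then show "dist (f a) (f x) < e" using assms[of a x] a by (simp add: dist_real_def)
    qed
  qed
  then show ?thesis by simp
qed

definition bump :: "'a set \<Rightarrow> real \<Rightarrow> 'a \<Rightarrow> real" where
  "bump C \<rho> y = (if C = {} then 0 else (SUP c\<in>C. max 0 (\<rho> - d y c)))"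

lemma bump_bdd: "\<rho> > 0 \<Longrightarrow> bdd_above ((\<lambda>c. max 0 (\<rho> - d y c)) ` C)"
  by (rule bdd_aboveI[of _ \<rho>]) (auto simp: nonneg)

lemma bump_nonneg:
  assumes "\<rho> > 0" shows "0 \<le> bump C \<rho> y"
proof (cases "C = {}")
  case False
  then obtain c where "c \<in> C" by blast
  then have "0 \<le> (SUP c\<in>C. max 0 (\<rho> - d y c))"
    by (rule cSUP_upper2[OF bump_bdd[OF assms]]) simp
  then show ?thesis using False by (simp add: bump_def)
qed (simp add: bump_def)

lemma bump_pos_iff:
  assumes "\<rho> > 0" shows "0 < bump C \<rho> y \<longleftrightarrow> (\<exists>c\<in>C. d y c < \<rho>)"
proof (cases "C = {}")
  case False
  then have "0 < bump C \<rho> y \<longleftrightarrow> (\<exists>c\<in>C. 0 < max 0 (\<rho> - d y c))"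
    by (simp add: bump_def less_cSUP_iff[OF False bump_bdd[OF assms]])
  also have "\<dots> \<longleftrightarrow> (\<exists>c\<in>C. d y c < \<rho>)" by (simp add: less_max_iff_disj)
  finally show ?thesis .
qed (simp add: bump_def)

lemma continuous_bump:
  assumes C: "C \<subseteq> M" and \<rho>: "\<rho> > 0"
  shows "continuous_map mtopology euclideanreal (bump C \<rho>)"
proof -
  have half: "bump C \<rho> y \<le> bump C \<rho> z + d y z" if y: "y \<in> M" and z: "z \<in> M" for y z
  proof (cases "C = {}")
    case False
    have "(SUP c\<in>C. max 0 (\<rho> - d y c)) \<le> bump C \<rho> z + d y z"
    proof (rule cSUP_least[OF False])
      fix c assume c: "c \<in> C"
      then have "d z c \<le> d z y + d y c" using triangle[OF z y] C by blast
      then have "max 0 (\<rho> - d y c) \<le> max 0 (\<rho> - d z c) + d y z"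
        using nonneg[of y z] commute[of y z] by auto
      moreover have "max 0 (\<rho> - d z c) \<le> bump C \<rho> z"
        using cSUP_upper[OF c bump_bdd[OF \<rho>]] False by (simp add: bump_def)
      ultimately show "max 0 (\<rho> - d y c) \<le> bump C \<rho> z + d y z" by linarith
    qed
    then show ?thesis using False by (simp add: bump_def)
  qed (simp add: bump_def nonneg)
  show ?thesis
  proof (rule continuous_map_1_lipschitz)
    fix y z assume "y \<in> M" "z \<in> M"
    then show "\<bar>bump C \<rho> y - bump C \<rho> z\<bar> \<le> d y z"
      using half[of y z] half[of z y] commute[of y z] by linarith
  qed
qed

end

definition radius :: "nat \<Rightarrow> real" where
  "radius n = (1/2) ^ n"

lemma radius_pos: "0 < radius n"
  by (simp add: radius_def)

lemma radius_antimono: "m \<le> n \<Longrightarrow> radius n \<le> radius m"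
  unfolding radius_def by (rule power_decreasing) auto

lemma radius_Suc: "radius (Suc n) = radius n / 2"
  by (simp add: radius_def)

lemma radius_small: "e > 0 \<Longrightarrow> \<exists>n. radius n < e"
  unfolding radius_def using real_arch_pow_inv[of e "1/2"] by simp

text \<open>Following Rudin's proof
  that metric spaces are paracompact, generation \<open>n\<close> of the refinement consists of the
  cells \<open>cell n V\<close>: unions of balls of radius \<open>radius n\<close> about centres \<open>c\<close> such that
  \<open>V\<close> is the first member of the cover containing \<open>c\<close>, \<open>c\<close> is not covered by earlier
  generations, and the ball of radius \<open>3 * radius n\<close> about \<open>c\<close> lies in \<open>V\<close>.\<close>

locale metric_cover = Metric_space M d for M :: "'a set" and d +
  fixes \<U> :: "'a set set" and w :: "'a set rel"
  assumes open_cover: "\<And>U. U \<in> \<U> \<Longrightarrow> openin mtopology U"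
    and covers: "\<Union>\<U> = M"
    and well_order: "well_order_on \<U> w"
begin

definition first_member :: "'a set \<Rightarrow> 'a \<Rightarrow> bool" where
  "first_member V c \<longleftrightarrow> V \<in> \<U> \<and> c \<in> V \<and> (\<forall>W\<in>\<U>. c \<in> W \<longrightarrow> (V, W) \<in> w)"

definition new_centres :: "nat \<Rightarrow> 'a set \<Rightarrow> 'a set \<Rightarrow> 'a set" where
  "new_centres n V K = {c\<in>M. first_member V c \<and> c \<notin> K \<and> mball c (3 * radius n) \<subseteq> V}"

definition covered :: "nat \<Rightarrow> 'a set" where
  "covered = rec_nat {} (\<lambda>n K. K \<union> (\<Union>V\<in>\<U>. \<Union>c\<in>new_centres n V K. mball c (radius n)))"

definition centres :: "nat \<Rightarrow> 'a set \<Rightarrow> 'a set" where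
  "centres n V = new_centres n V (covered n)"

definition cell :: "nat \<Rightarrow> 'a set \<Rightarrow> 'a set" where
  "cell n V = (\<Union>c\<in>centres n V. mball c (radius n))"

lemma covered_iff: "x \<in> covered n \<longleftrightarrow> (\<exists>j<n. \<exists>V\<in>\<U>. x \<in> cell j V)"
proof (induction n)
  case 0 then show ?case by (simp add: covered_def)
next
  case (Suc n)
  have "covered (Suc n) = covered n \<union> (\<Union>V\<in>\<U>. cell n V)"
    by (simp add: covered_def cell_def centres_def)
  then have "x \<in> covered (Suc n) \<longleftrightarrow> (\<exists>j<n. \<exists>V\<in>\<U>. x \<in> cell j V) \<or> (\<exists>V\<in>\<U>. x \<in> cell n V)"
    by (simp add: Suc.IH)
  also have "\<dots> \<longleftrightarrow> (\<exists>j<Suc n. \<exists>V\<in>\<U>. x \<in> cell j V)" by (auto simp: less_Suc_eq)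
  finally show ?case .
qed

lemma first_member_exists:
  assumes "x \<in> M" shows "\<exists>V. first_member V x"
proof -
  have ne: "{V\<in>\<U>. x \<in> V} \<noteq> {}" using assms covers by blast
  have "wf (w - Id)" using well_order by (simp add: well_order_on_def)
  then obtain V where V: "V \<in> {V\<in>\<U>. x \<in> V}" and min: "\<And>W. (W, V) \<in> w - Id \<Longrightarrow> W \<notin> {V\<in>\<U>. x \<in> V}"
    using wfE_min'[OF _ ne] by metis
  have "(V, W) \<in> w" if W: "W \<in> \<U>" "x \<in> W" for W
  proof (cases "W = V")
    case True
    then show ?thesis using V well_order
      by (simp add: well_order_on_def linear_order_on_def partial_order_on_def preorder_on_def refl_on_def)
  next
    case False
    then have "(V, W) \<in> w \<or> (W, V) \<in> w"
      using V W well_order by (simp add: well_order_on_def linear_order_on_def total_on_def)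
    then show ?thesis using min[of W] W False by blast
  qed
  then show ?thesis using V unfolding first_member_def by blast
qed

lemma first_member_excludes:
  assumes "first_member V' q" "V \<in> \<U>" "(V, V') \<in> w" "V \<noteq> V'"
  shows "q \<notin> V"
proof
  assume "q \<in> V"
  then have "(V', V) \<in> w" using assms(1,2) by (simp add: first_member_def)
  moreover have "antisym w"
    using well_order by (simp add: well_order_on_def linear_order_on_def partial_order_on_def)
  ultimately show False using assms(3,4) by (meson antisymD)
qed

lemma centres_subset: "centres n V \<subseteq> M"
  by (auto simp: centres_def new_centres_def)

lemma cell_subset: "cell n V \<subseteq> V"
proof
  fix y assume "y \<in> cell n V"
  then obtain c where c: "c \<in> centres n V" "y \<in> mball c (radius n)" by (auto simp: cell_def)
  have "mball c (radius n) \<subseteq> mball c (3 * radius n)"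
    by (rule mball_subset_concentric) (use radius_pos[of n] in simp)
  also have "\<dots> \<subseteq> V" using c(1) by (simp add: centres_def new_centres_def)
  finally show "y \<in> V" using c(2) by blast
qed

lemma cell_open: "openin mtopology (cell n V)"
  unfolding cell_def by (rule openin_Union) auto

text \<open>Every point lies in some cell: once \<open>3 * radius n\<close> is below the distance to the
  complement of its first member, it is either already covered or a centre itself.\<close>

lemma cell_cover:
  assumes x: "x \<in> M" shows "\<exists>n V. V \<in> \<U> \<and> x \<in> cell n V"
proof -
  obtain V where V: "first_member V x" using first_member_exists[OF x] by blast
  then have VU: "V \<in> \<U>" "x \<in> V" by (auto simp: first_member_def)
  then obtain e where e: "e > 0" "mball x e \<subseteq> V" using open_cover[of V] openin_mtopology by blast
  obtain n where n: "radius n < e / 3" using radius_small[of "e/3"] e by auto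
  show ?thesis
  proof (cases "x \<in> covered n")
    case True then show ?thesis using covered_iff by blast
  next
    case False
    have "mball x (3 * radius n) \<subseteq> mball x e" by (rule mball_subset_concentric) (use n in simp)
    then have "x \<in> centres n V" using False x V e(2) by (auto simp: centres_def new_centres_def)
    then have "x \<in> cell n V" using x radius_pos[of n] by (auto simp: cell_def)
    then show ?thesis using VU by blast
  qed
qed

text \<open>Cells of one generation belonging to different members of the cover are
  \<open>radius n\<close> apart: their centres are \<open>3 * radius n\<close> apart.\<close>

lemma cells_apart:
  assumes V: "V \<in> \<U>" "V' \<in> \<U>" "V \<noteq> V'" and y: "y \<in> cell n V" "y' \<in> cell n V'"
  shows "radius n \<le> d y y'"
proof -
  have apart: "radius n \<le> d y y'"
    if hyps: "V \<in> \<U>" "V' \<in> \<U>" "(V, V') \<in> w" "V \<noteq> V'" "y \<in> cell n V" "y' \<in> cell n V'"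
    for V V' y y'
  proof -
    obtain p where p: "p \<in> centres n V" "y \<in> mball p (radius n)" using hyps(5) by (auto simp: cell_def)
    obtain q where q: "q \<in> centres n V'" "y' \<in> mball q (radius n)" using hyps(6) by (auto simp: cell_def)
    have "first_member V' q" using q(1) by (simp add: centres_def new_centres_def)
    then have "q \<notin> V" using first_member_excludes hyps(1,3,4) by blast
    moreover have "mball p (3 * radius n) \<subseteq> V" using p(1) by (simp add: centres_def new_centres_def)
    ultimately have "q \<notin> mball p (3 * radius n)" by blast
    moreover have pq: "p \<in> M" "q \<in> M" using p(1) q(1) centres_subset by blast+
    ultimately have "3 * radius n \<le> d p q" by auto
    moreover have "d p q \<le> d p y + d y y' + d y' q"
      using triangle[of p y q] triangle[of y y' q] pq p(2) q(2) by auto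
    moreover have "d p y < radius n" "d y' q < radius n" using p(2) q(2) commute by auto
    ultimately show ?thesis by linarith
  qed
  have "(V, V') \<in> w \<or> (V', V) \<in> w"
    using V well_order by (simp add: well_order_on_def linear_order_on_def total_on_def)
  then show ?thesis
    using apart[OF V(1,2) _ V(3) y] apart[OF V(2,1) _ V(3)[symmetric] y(2,1)] commute[of y y'] by auto
qed

text \<open>Once a ball around \<open>x\<close> lies in a cell of generation \<open>n\<close>, centres of later
  generations avoid it, so later cells stay away from \<open>x\<close>.\<close>

lemma later_cells_avoid:
  assumes x: "x \<in> M" and U: "U \<in> \<U>" and ball: "mball x (2 * \<rho>) \<subseteq> cell n U"
    and i: "n < i" "radius i \<le> \<rho>"
  shows "cell i V \<inter> mball x \<rho> = {}"
proof (rule ccontr)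
  assume "cell i V \<inter> mball x \<rho> \<noteq> {}"
  then obtain y where "y \<in> cell i V" "y \<in> mball x \<rho>" by blast
  then obtain c where y: "y \<in> mball x \<rho>" "y \<in> mball c (radius i)" and c: "c \<in> centres i V"
    unfolding cell_def by blast
  have "c \<notin> covered i" "c \<in> M" using c by (auto simp: centres_def new_centres_def)
  moreover have "cell n U \<subseteq> covered i" using covered_iff U i(1) by blast
  ultimately have "c \<notin> mball x (2 * \<rho>)" using ball by blast
  then have "2 * \<rho> \<le> d x c" using x \<open>c \<in> M\<close> by auto
  moreover have "d x c \<le> d x y + d y c" using triangle x \<open>c \<in> M\<close> y by auto
  moreover have "d x y < \<rho>" "d y c < radius i" using y commute by auto
  ultimately show False using i(2) by linarith
qed

lemma cells_meeting_small_ball: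
  assumes x: "x \<in> M" and \<rho>: "2 * \<rho> \<le> radius i" and V: "V \<in> \<U>" "V' \<in> \<U>"
    and meet: "cell i V \<inter> mball x \<rho> \<noteq> {}" "cell i V' \<inter> mball x \<rho> \<noteq> {}"
  shows "V = V'"
proof (rule ccontr)
  assume "V \<noteq> V'"
  obtain y y' where y: "y \<in> cell i V" "y \<in> mball x \<rho>" "y' \<in> cell i V'" "y' \<in> mball x \<rho>"
    using meet by blast
  have "radius i \<le> d y y'" using cells_apart V \<open>V \<noteq> V'\<close> y(1,3) by blast
  moreover have "d y y' \<le> d y x + d x y'" using triangle x y(2,4) by auto
  moreover have "d y x < \<rho>" "d x y' < \<rho>" using y(2,4) commute by auto
  ultimately show False using \<rho> by linarith
qed

text \<open>The cells form a locally finite family: around a point of a cell of generation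
  \<open>n\<close>, a small ball avoids all late generations and meets at most one cell of each early
  generation.\<close>

lemma cells_locally_finite:
  assumes x: "x \<in> M"
  shows "\<exists>\<rho>>0. finite {(i, V). V \<in> \<U> \<and> cell i V \<inter> mball x \<rho> \<noteq> {}}"
proof -
  obtain n U where U: "U \<in> \<U>" "x \<in> cell n U" using cell_cover[OF x] by blast
  obtain e where e: "e > 0" "mball x e \<subseteq> cell n U" using cell_open[of n U] U(2) openin_mtopology by blast
  obtain j where j: "radius j < e" using radius_small e by blast
  define k where "k = n + j + 1"
  define \<rho> where "\<rho> = radius k"
  have "2 * \<rho> = radius (n + j)" by (simp add: \<rho>_def k_def radius_Suc)
  also have "\<dots> \<le> radius j" by (rule radius_antimono) simp
  finally have "mball x (2 * \<rho>) \<subseteq> cell n U" using e(2) j mball_subset_concentric[of "2 * \<rho>" e x] by simp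
  then have late: "cell i V \<inter> mball x \<rho> = {}" if "k \<le> i" for i V
    by (rule later_cells_avoid[OF x U(1)]) (use that radius_antimono in \<open>auto simp: k_def \<rho>_def\<close>)
  have "{(i, V). V \<in> \<U> \<and> cell i V \<inter> mball x \<rho> \<noteq> {}}
        \<subseteq> Sigma {..<k} (\<lambda>i. {V\<in>\<U>. cell i V \<inter> mball x \<rho> \<noteq> {}})"
  proof
    fix p assume "p \<in> {(i, V). V \<in> \<U> \<and> cell i V \<inter> mball x \<rho> \<noteq> {}}"
    then obtain i V where p: "p = (i, V)" "V \<in> \<U>" "cell i V \<inter> mball x \<rho> \<noteq> {}" by blast
    then have "i < k" using late not_le by blast
    then show "p \<in> Sigma {..<k} (\<lambda>i. {V\<in>\<U>. cell i V \<inter> mball x \<rho> \<noteq> {}})" using p by simp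
  qed
  moreover have "finite {V\<in>\<U>. cell i V \<inter> mball x \<rho> \<noteq> {}}" if "i < k" for i
  proof (cases "{V\<in>\<U>. cell i V \<inter> mball x \<rho> \<noteq> {}} = {}")
    case False
    then obtain V where V: "V \<in> \<U>" "cell i V \<inter> mball x \<rho> \<noteq> {}" by blast
    have "2 * \<rho> \<le> radius i"
      using radius_antimono[of "Suc i" k] that by (simp add: \<rho>_def radius_Suc)
    then have "{V\<in>\<U>. cell i V \<inter> mball x \<rho> \<noteq> {}} \<subseteq> {V}"
      using cells_meeting_small_ball[OF x _ V(1) _ V(2)] by blast
    then show ?thesis by (rule finite_subset) simp
  qed (simp only: finite.emptyI)
  ultimately have "finite {(i, V). V \<in> \<U> \<and> cell i V \<inter> mball x \<rho> \<noteq> {}}"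
    by (meson finite_SigmaI finite_lessThan finite_subset lessThan_iff)
  then show ?thesis using radius_pos[of k] by (auto simp: \<rho>_def)
qed

end

context metric_cover
begin

definition indices :: "(nat \<times> 'a set) set" where
  "indices = UNIV \<times> \<U>"

definition psi :: "nat \<times> 'a set \<Rightarrow> 'a \<Rightarrow> real" where
  "psi i = bump (centres (fst i) (snd i)) (radius (fst i))"

definition weight :: "'a \<Rightarrow> real" where
  "weight y = (\<Sum>i | i \<in> indices \<and> psi i y \<noteq> 0. psi i y)"

lemma psi_continuous: "continuous_map mtopology euclideanreal (psi i)"
  unfolding psi_def by (rule continuous_bump[OF centres_subset radius_pos])

lemma psi_nonneg: "0 \<le> psi i y"
  unfolding psi_def by (rule bump_nonneg[OF radius_pos])

lemma psi_nonzero_iff: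
  assumes "y \<in> M" shows "psi i y \<noteq> 0 \<longleftrightarrow> y \<in> cell (fst i) (snd i)"
proof -
  have "psi i y \<noteq> 0 \<longleftrightarrow> (\<exists>c\<in>centres (fst i) (snd i). d y c < radius (fst i))"
    using bump_pos_iff[OF radius_pos] psi_nonneg[of i y] unfolding psi_def
    by (metis order_less_le)
  also have "\<dots> \<longleftrightarrow> y \<in> cell (fst i) (snd i)"
    using assms centres_subset commute by (auto simp: cell_def)
  finally show ?thesis .
qed

lemma psi_locally_finite:
  assumes x: "x \<in> M"
  shows "\<exists>N. openin mtopology N \<and> x \<in> N \<and> finite {i\<in>indices. \<exists>y\<in>N. psi i y \<noteq> 0}"
proof -
  obtain \<rho> where \<rho>: "\<rho> > 0" "finite {(i, V). V \<in> \<U> \<and> cell i V \<inter> mball x \<rho> \<noteq> {}}"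
    using cells_locally_finite[OF x] by blast
  have "{i\<in>indices. \<exists>y\<in>mball x \<rho>. psi i y \<noteq> 0} \<subseteq> {(i, V). V \<in> \<U> \<and> cell i V \<inter> mball x \<rho> \<noteq> {}}"
  proof
    fix p assume "p \<in> {i\<in>indices. \<exists>y\<in>mball x \<rho>. psi i y \<noteq> 0}"
    then obtain y where p: "p \<in> indices" "y \<in> mball x \<rho>" "psi p y \<noteq> 0" by blast
    then have "y \<in> cell (fst p) (snd p)" using psi_nonzero_iff by auto
    then show "p \<in> {(i, V). V \<in> \<U> \<and> cell i V \<inter> mball x \<rho> \<noteq> {}}"
      using p(1,2) by (cases p) (auto simp: indices_def)
  qed
  then have "finite {i\<in>indices. \<exists>y\<in>mball x \<rho>. psi i y \<noteq> 0}" using \<rho>(2) finite_subset by blast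
  then show ?thesis using x \<rho>(1) by (intro exI[of _ "mball x \<rho>"]) auto
qed

lemma psi_finite_support: "y \<in> M \<Longrightarrow> finite {i\<in>indices. psi i y \<noteq> 0}"
  using psi_locally_finite[of y] by (metis (no_types, lifting) finite_subset mem_Collect_eq subsetI)

lemma weight_continuous: "continuous_map mtopology euclideanreal weight"
proof -
  have "continuous_map mtopology euclideanreal (\<lambda>y. \<Sum>i | i \<in> indices \<and> psi i y \<noteq> 0. psi i y)"
    by (rule continuous_map_locally_finite_sum) (use psi_continuous psi_locally_finite in auto)
  then show ?thesis by (simp add: weight_def[abs_def])
qed

lemma weight_pos:
  assumes y: "y \<in> M" shows "0 < weight y"
proof -
  obtain n V where "V \<in> \<U>" "y \<in> cell n V" using cell_cover[OF y] by blast
  then have nV: "(n, V) \<in> {i. i \<in> indices \<and> psi i y \<noteq> 0}" "0 < psi (n, V) y"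
    using psi_nonzero_iff[OF y, of "(n, V)"] psi_nonneg[of "(n, V)" y] by (auto simp: indices_def)
  have "finite {i. i \<in> indices \<and> psi i y \<noteq> 0}" using psi_finite_support[OF y] by simp
  from sum_pos2[where f = "\<lambda>i. psi i y", OF this nV] show ?thesis
    unfolding weight_def using psi_nonneg by blast
qed

text \<open>Normalising the bumps gives a partition of unity on \<open>M\<close>; outside \<open>M\<close> all weight
  is put on a chosen index \<open>i0\<close>, so that the sums are identically \<open>1\<close>.\<close>

definition normalised :: "nat \<times> 'a set \<Rightarrow> nat \<times> 'a set \<Rightarrow> 'a \<Rightarrow> real" where
  "normalised i0 i y = (if y \<in> M then psi i y / weight y else if i = i0 then 1 else 0)"

lemma normalised_nonzero_iff:
  "y \<in> M \<Longrightarrow> normalised i0 i y \<noteq> 0 \<longleftrightarrow> psi i y \<noteq> 0"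
  using weight_pos[of y] by (simp add: normalised_def)

lemma normalised_continuous: "continuous_map mtopology euclideanreal (normalised i0 i)"
proof -
  have "continuous_map mtopology euclideanreal (\<lambda>y. psi i y / weight y)"
    by (rule continuous_map_real_divide[OF psi_continuous weight_continuous])
       (use weight_pos in force)
  then show ?thesis by (rule continuous_map_eq) (simp add: normalised_def)
qed

lemma normalised_nonneg: "0 \<le> normalised i0 i y"
proof (cases "y \<in> M")
  case True
  then show ?thesis
    using psi_nonneg[of i y] weight_pos[OF True] by (simp add: normalised_def divide_nonneg_pos)
qed (simp add: normalised_def)

lemma normalised_locally_finite:
  assumes "x \<in> M"
  shows "\<exists>N. openin mtopology N \<and> x \<in> N \<and> finite {i\<in>indices. \<exists>y\<in>N. normalised i0 i y \<noteq> 0}"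
proof -
  obtain N where N: "openin mtopology N" "x \<in> N" "finite {i\<in>indices. \<exists>y\<in>N. psi i y \<noteq> 0}"
    using psi_locally_finite[OF assms] by blast
  have "N \<subseteq> M" using N(1) openin_subset by fastforce
  then have "{i\<in>indices. \<exists>y\<in>N. normalised i0 i y \<noteq> 0} \<subseteq> {i\<in>indices. \<exists>y\<in>N. psi i y \<noteq> 0}"
    using normalised_nonzero_iff by blast
  then show ?thesis using N finite_subset by blast
qed

lemma normalised_finite_support:
  assumes "i0 \<in> indices" shows "finite {i\<in>indices. normalised i0 i y \<noteq> 0}"
proof (cases "y \<in> M")
  case True
  then show ?thesis using normalised_nonzero_iff psi_finite_support by simp
qed (simp add: normalised_def)

lemma normalised_sum_one:
  assumes i0: "i0 \<in> indices"
  shows "(\<Sum>i | i \<in> indices \<and> normalised i0 i y \<noteq> 0. normalised i0 i y) = 1"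
proof (cases "y \<in> M")
  case True
  then have "(\<Sum>i | i \<in> indices \<and> normalised i0 i y \<noteq> 0. normalised i0 i y)
           = (\<Sum>i | i \<in> indices \<and> psi i y \<noteq> 0. psi i y) / weight y"
    using weight_pos[OF True] by (simp add: normalised_def sum_divide_distrib)
  then show ?thesis using weight_pos[OF True] by (simp add: weight_def)
next
  case False
  then have "{i. i \<in> indices \<and> normalised i0 i y \<noteq> 0} = {i0}"
    using i0 by (auto simp: normalised_def)
  then show ?thesis using False by (simp add: normalised_def)
qed

lemma normalised_subordinate:
  assumes i: "i \<in> indices"
  shows "\<exists>U\<in>\<U>. {x\<in>topspace mtopology. normalised i0 i x \<noteq> 0} \<subseteq> U"
proof -
  have "{x\<in>topspace mtopology. normalised i0 i x \<noteq> 0} \<subseteq> cell (fst i) (snd i)"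
  proof
    fix x assume "x \<in> {x\<in>topspace mtopology. normalised i0 i x \<noteq> 0}"
    then have "x \<in> M" "normalised i0 i x \<noteq> 0" by auto
    then have "x \<in> M" "psi i x \<noteq> 0" using normalised_nonzero_iff[of x i0 i] by simp_all
    then show "x \<in> cell (fst i) (snd i)" using psi_nonzero_iff by blast
  qed
  also have "\<dots> \<subseteq> snd i" by (rule cell_subset)
  finally show ?thesis using i by (auto simp: indices_def)
qed

lemma normalised_partition:
  assumes "i0 \<in> indices"
  shows "partition_of_unity mtopology indices (normalised i0) \<U>"
  by unfold_locales
    (use assms normalised_continuous normalised_nonneg normalised_locally_finite
      normalised_finite_support normalised_sum_one normalised_subordinate in auto)

end

lemma metrizable_partition_of_unity:
  fixes X :: "'a topology"
  assumes X: "metrizable_space X" and \<U>: "\<forall>U\<in>\<U>. openin X U" "\<Union>\<U> = topspace X"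
    and ne: "topspace X \<noteq> {}"
  shows "\<exists>(I :: (nat \<times> 'a set) set) \<phi>. partition_of_unity X I \<phi> \<U>"
proof -
  obtain M d where Md: "Metric_space M d" "X = Metric_space.mtopology M d"
    using X unfolding metrizable_space_def by blast
  interpret Metric_space M d by (rule Md(1))
  obtain w where "well_order_on \<U> w" using well_order_on by blast
  then interpret metric_cover M d \<U> w
    using \<U> Md(2) by unfold_locales auto
  obtain V0 where "V0 \<in> \<U>" using ne \<U>(2) by blast
  then have "(0, V0) \<in> indices" by (simp add: indices_def)
  then have "partition_of_unity X indices (normalised (0, V0)) \<U>"
    unfolding Md(2) by (rule normalised_partition)
  then show ?thesis by blast
qed

lemma (in partition_of_unity) exists_ordering: "\<exists>r. ordered_partition_of_unity X I \<phi> \<U> r"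
proof -
  obtain r where "well_order_on I r" using well_order_on by blast
  then have "strict_linear_order_on I (r - Id)"
    by (simp add: strict_linear_order_on_diff_Id well_order_on_def)
  then have "ordered_partition_of_unity X I \<phi> \<U> (r - Id)"
    using partition_of_unity_axioms
    by (simp add: ordered_partition_of_unity_def ordered_partition_of_unity_axioms_def)
  then show ?thesis by blast
qed

text \<open>On an empty space the family of the two constant functions works: there are no
  nonempty wedges at all.\<close>

lemma dissection_of_empty_space:
  assumes "topspace X = {}"
  shows "\<exists>F. continuous_dissection X F \<and> l_complete X F \<and>
           (\<forall>W. minimal_wedge X F W \<longrightarrow> (\<exists>U\<in>\<U>. W \<subseteq> U \<times> {0<..1}))"
proof (intro exI conjI allI impI)
  let ?F = "{\<lambda>x. 0, \<lambda>x. 1} :: ('a \<Rightarrow> real) set"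
  show "continuous_dissection X ?F"
    unfolding continuous_dissection_def using assms by simp
  have "\<exists>\<eta>\<in>?F. eq_on X \<eta> g" for g unfolding eq_on_def using assms by blast
  then show "l_complete X ?F" unfolding l_complete_def by simp
  fix W assume "minimal_wedge X ?F W"
  then obtain \<xi>1 \<xi>2 where "W = wedge X \<xi>1 \<xi>2" "W \<noteq> {}"
    unfolding minimal_wedge_def is_wedge_def by blast
  then show "\<exists>U\<in>\<U>. W \<subseteq> U \<times> {0<..1}" using assms by (simp add: wedge_def)
qed

theorem lemma4p5:
  fixes X :: "'a topology" and \<U> :: "'a set set"
  assumes "metrizable_space X"
    and "\<forall>U\<in>\<U>. openin X U"
    and "\<Union>\<U> = topspace X"
  shows "\<exists>F. continuous_dissection X F \<and> l_complete X F \<and>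
           (\<forall>W. minimal_wedge X F W \<longrightarrow> (\<exists>U\<in>\<U>. W \<subseteq> U \<times> {0<..1}))"
proof (cases "topspace X = {}")
  case True
  then show ?thesis by (rule dissection_of_empty_space)
next
  case False
  then obtain I :: "(nat \<times> 'a set) set" and \<phi> where "partition_of_unity X I \<phi> \<U>"
    using metrizable_partition_of_unity assms by blast
  then obtain r where "ordered_partition_of_unity X I \<phi> \<U> r"
    using partition_of_unity.exists_ordering by blast
  then show ?thesis by (rule ordered_partition_of_unity.dissection_for_cover)
qed

end
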